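(* Let $\lambda,\mu,\alpha>0$ and let $\xi(t)$, $t\ge 0$, be the Poisson process with uniform catastrophes with parameters $\lambda,\mu,\alpha$ (defined in the context). Let $\varphi:(0,\infty)\to(0,\infty)$ be a function with $\varphi(T)\to\infty$ as $T\to\infty$, and suppose there is $k>0$ such that $\lim_{T\to\infty}\varphi(T)/T=k$. Then the family of random variables $\xi_T(1):=\xi(T)/\varphi(T)$ satisfies the large deviation principle on $\mathbb{R}$ with normalizing function $\psi(T)=\varphi(T)$ and rate function $$ J_k(x)=\begin{cases}\infty, & x\in(-\infty,0),\\ x\ln\left(\frac{\lambda+\mu}{\lambda}\right), & x\in\left[0,\frac{\alpha}{k}\right),\\ x\ln\left(\frac{kx(\lambda+\mu)}{\alpha\lambda}\right)-x+\frac{\alpha}{k}, & x\in\left[\frac{\alpha}{k},\infty\right).\end{cases} $$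
   Context: Poisson process with uniform catastrophes: let $\eta(n)$, $n\in\mathbb{Z}^+=\{0,1,2,\dots\}$, be a Markov chain on $\mathbb{Z}^+$ with $\eta(0)=0$ and transition probabilities $\mathbf{P}(\eta(n+1)=j\mid\eta(n)=i)=\frac{\lambda}{\lambda+\mu}$ if $j=i+1$ (and $i\ge 1$), $=\frac{\mu}{i(\lambda+\mu)}$ if $0\le j<i$, $i\neq0$, and $=1$ if $i=0$, $j=1$. Let $\nu(t)$, $t\ge0$, be a Poisson process with rate $\alpha$, independent of $\eta$. Set $\xi(t):=\eta(\nu(t))$. Large deviation principle (LDP): a family of real random variables $X_T$ satisfies the LDP with rate function $I:\mathbb{R}\to[0,\infty]$ and normalizing function $\psi(T)\to\infty$ if for every $c\ge0$ the set $\{x: I(x)\le c\}$ is compact, and for every Borel set $B\subseteq\mathbb{R}$, $\limsup_{T\to\infty}\frac{1}{\psi(T)}\ln\mathbf{P}(X_T\in B)\le -I([B])$ and $\liminf_{T\to\infty}\frac{1}{\psi(T)}\ln\mathbf{P}(X_T\in B)\ge -I((B))$, where $[B]$ and $(B)$ denote closure and interior, $I(B)=\inf_{x\in B}I(x)$ and $I(\emptyset)=\infty$. *)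

theory Defs
  imports "HOL-Probability.Probability"
begin

definition eta_step :: "real \<Rightarrow> real \<Rightarrow> nat \<Rightarrow> nat pmf" where
  "eta_step lam mu i =
     (if i = 0 then return_pmf 1
      else bind_pmf (bernoulli_pmf (lam / (lam + mu)))
             (\<lambda>b. if b then return_pmf (i + 1) else pmf_of_set {..<i}))"

fun eta_law :: "real \<Rightarrow> real \<Rightarrow> nat \<Rightarrow> nat pmf" where
  "eta_law lam mu 0 = return_pmf 0"
| "eta_law lam mu (Suc n) = bind_pmf (eta_law lam mu n) (eta_step lam mu)"

text \<open>Law of xi(t) = eta(nu(t)), nu a rate-alpha Poisson process independent of eta:
  nu(t) ~ Poisson(alpha t) (and nu(0) = 0).\<close>
definition xi_law :: "real \<Rightarrow> real \<Rightarrow> real \<Rightarrow> real \<Rightarrow> nat pmf" where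
  "xi_law lam mu alpha t =
     (if t > 0 then bind_pmf (poisson_pmf (alpha * t)) (eta_law lam mu) else return_pmf 0)"

definition eln :: "real \<Rightarrow> ereal" where
  "eln p = (if p = 0 then - \<infinity> else ereal (ln p))"

text \<open>Large deviation principle for a family of real random variables, given through
  the probabilities P T B = P(X_T \<in> B), with rate function I and normalization psi.\<close>
definition LDP :: "(real \<Rightarrow> real set \<Rightarrow> real) \<Rightarrow> (real \<Rightarrow> ereal) \<Rightarrow> (real \<Rightarrow> real) \<Rightarrow> bool" where
  "LDP P I psi \<longleftrightarrow>
     (\<forall>x. I x \<ge> 0) \<and>
     (\<forall>c\<ge>0. compact {x. I x \<le> ereal c}) \<and>
     (\<forall>B \<in> sets borel.
        Limsup at_top (\<lambda>T. eln (P T B) / ereal (psi T)) \<le> - (INF x\<in>closure B. I x) \<and>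
        Liminf at_top (\<lambda>T. eln (P T B) / ereal (psi T)) \<ge> - (INF x\<in>interior B. I x))"

definition J_rate :: "real \<Rightarrow> real \<Rightarrow> real \<Rightarrow> real \<Rightarrow> real \<Rightarrow> ereal" where
  "J_rate lam mu alpha k x =
     (if x < 0 then \<infinity>
      else if x < alpha / k then ereal (x * ln ((lam + mu) / lam))
      else ereal (x * ln (k * x * (lam + mu) / (alpha * lam)) - x + alpha / k))"

end

theory Submission
  imports Defs "HOL-Real_Asymp.Real_Asymp"
begin

text \<open>
  A large value of xi(T) is reached essentially in one way: after the last catastrophe the chain
  climbs straight up. Reaching height x phi(T) costs x ln((lam + mu) / lam) for the climb, plus,
  when x exceeds the typical number alpha / k of Poisson rings per unit of phi(T), the Cramer
  cost of the Poisson clock ringing x phi(T) times.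

  Upper bound: for 1 < r < 1 / p, with p = lam / (lam + mu), the function r^i grows by at most
  an additive constant K per step of eta on average (a catastrophe from height i lands at some
  j < i, contributing O(r^i / i)), so E r^eta(n) <= 1 + n K. Markov's inequality, tilted by
  s^(n - x) to exploit eta(n) <= n, averaged over the Poisson number n of steps, gives a Chernoff
  bound whose exponent tends to -J as r tends to 1 / p.

  Lower bound: given N ~ c phi(T) Poisson rings, a catastrophe into {0, 1} at step N - m followed
  by m straight climbs puts xi(T) into {m, m + 1}; the bound n! <= (n + 1)^(n + 1) e^(-n) for the
  Poisson weight and optimisation over c recover J.
\<close>

lemma emeasure_bind_pmf_ge:
  "ennreal (pmf M x) * emeasure (measure_pmf (f x)) A \<le> emeasure (measure_pmf (bind_pmf M f)) A"
proof -
  have "(\<integral>\<^sup>+y. emeasure (measure_pmf (f x)) A * indicator {x} y \<partial>measure_pmf M)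
      = emeasure (measure_pmf (f x)) A * emeasure (measure_pmf M) {x}"
    by (rule nn_integral_cmult_indicator) simp
  then have "ennreal (pmf M x) * emeasure (measure_pmf (f x)) A
      = (\<integral>\<^sup>+y. emeasure (measure_pmf (f x)) A * indicator {x} y \<partial>measure_pmf M)"
    by (simp add: emeasure_pmf_single mult.commute)
  also have "\<dots> \<le> (\<integral>\<^sup>+y. emeasure (measure_pmf (f y)) A \<partial>measure_pmf M)"
    by (intro nn_integral_mono) (auto split: split_indicator)
  also have "\<dots> = emeasure (measure_pmf (bind_pmf M f)) A"
    by simp
  finally show ?thesis .
qed

lemma eventually_le_imp_le_add_const:
  fixes f g :: "nat \<Rightarrow> real"
  assumes "eventually (\<lambda>i. f i \<le> g i) sequentially"
  shows "\<exists>K>0. \<forall>i. f i \<le> g i + K"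
proof -
  obtain N where N: "\<And>i. i \<ge> N \<Longrightarrow> f i \<le> g i"
    using assms by (auto simp: eventually_sequentially)
  define K where "K = Max ((\<lambda>i. f i - g i) ` {..N}) \<squnion> 1"
  have "f i \<le> g i + K" for i
  proof (cases "i \<le> N")
    case True
    then have "f i - g i \<le> Max ((\<lambda>i. f i - g i) ` {..N})" by (intro Max_ge) auto
    moreover have "Max ((\<lambda>i. f i - g i) ` {..N}) \<le> K" by (simp add: K_def)
    ultimately show ?thesis by linarith
  next
    case False
    then have "f i \<le> g i" by (intro N) simp
    moreover have "1 \<le> K" by (simp add: K_def)
    ultimately show ?thesis by linarith
  qed
  moreover have "0 < K" unfolding K_def by (rule less_supI2) simp
  ultimately show ?thesis by blast
qed

lemma real_nat_ceiling_less: "0 \<le> r \<Longrightarrow> real (nat \<lceil>r\<rceil>) < r + 1"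
  using ceiling_correct[of r] by linarith

lemma ln_fact_le: "ln (fact n :: real) \<le> (real n + 1) * ln (real n + 1) - real n"
proof (induction n)
  case 0
  then show ?case by simp
next
  case (Suc n)
  have "ln (real n + 1) - ln (real n + 2) = ln ((real n + 1) / (real n + 2))"
    by (simp add: ln_div)
  also have "\<dots> \<le> (real n + 1) / (real n + 2) - 1"
    by (intro ln_le_minus_one) auto
  also have "\<dots> = - 1 / (real n + 2)"
    by (simp add: field_simps)
  finally have "(real n + 2) * (ln (real n + 1) - ln (real n + 2)) \<le> - 1"
    by (simp add: field_simps)
  moreover have "ln (fact (Suc n) :: real) = ln (real n + 1) + ln (fact n)"
    by (simp add: ln_mult add.commute)
  ultimately show ?case
    using Suc by (simp add: algebra_simps)
qed

lemma ln_poisson_pmf_ge: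
  assumes "L > 0"
  shows "ln (pmf (poisson_pmf L) N)
           \<ge> real N * ln (L / (real N + 1)) - ln (real N + 1) + real N - L"
proof -
  have "ln (pmf (poisson_pmf L) N) = real N * ln L - ln (fact N) - L"
    using assms by (simp add: ln_mult_pos ln_div ln_realpow)
  moreover have "real N * ln (L / (real N + 1)) = real N * ln L - real N * ln (real N + 1)"
    using assms by (simp add: ln_div right_diff_distrib)
  ultimately show ?thesis
    using ln_fact_le[of N] by (simp add: distrib_right)
qed

lemma sums_poisson_pmf_affine_geometric:
  assumes "L > 0"
  shows "(\<lambda>n. pmf (poisson_pmf L) n * ((1 + real n * K) * s ^ n))
           sums (exp (L * (s - 1)) * (1 + K * L * s))"
proof -
  define x where "x = L * s"
  have exp_sums: "(\<lambda>n. x ^ n / fact n) sums exp x"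
    using exp_converges[of x] by (simp add: divide_inverse mult.commute)
  have "(\<lambda>n. real (Suc n) * x ^ Suc n / fact (Suc n)) = (\<lambda>n. x * (x ^ n / fact n))"
    by (simp add: fun_eq_iff field_simps del: of_nat_Suc)
  then have "(\<lambda>n. real (Suc n) * x ^ Suc n / fact (Suc n)) sums (x * exp x)"
    using sums_mult[OF exp_sums, of x] by simp
  then have "(\<lambda>n. real n * x ^ n / fact n) sums (x * exp x)"
    by (subst (asm) sums_Suc_iff[where f = "\<lambda>n. real n * x ^ n / fact n"]) simp
  then have "(\<lambda>n. exp (- L) * (x ^ n / fact n + K * (real n * x ^ n / fact n)))
               sums (exp (- L) * (exp x + K * (x * exp x)))"
    by (intro sums_mult sums_add exp_sums)
  moreover have "exp (- L) * (exp x + K * (x * exp x)) = exp (L * (s - 1)) * (1 + K * L * s)"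
    by (simp add: x_def algebra_simps flip: exp_add)
  ultimately show ?thesis
    using assms by (simp add: x_def power_mult_distrib field_simps)
qed

lemma one_le_tilted_power:
  fixes r s x :: real
  assumes "1 < r" and "1 \<le> s" and "j \<le> n" and "x \<le> real j"
  shows "1 \<le> s ^ n / (r * s) powr x * r ^ j"
proof -
  have rs: "1 \<le> r * s"
    using assms mult_mono[of 1 r 1 s] by simp
  have "(r * s) powr x \<le> (r * s) powr real j"
    using assms rs by (intro powr_mono) auto
  also have "\<dots> = r ^ j * s ^ j"
    using rs by (simp add: powr_realpow power_mult_distrib)
  also have "\<dots> \<le> r ^ j * s ^ n"
    using assms by (intro mult_left_mono power_increasing) auto
  finally have "(r * s) powr x \<le> s ^ n * r ^ j"
    by (simp only: mult.commute)
  moreover have "0 < (r * s) powr x"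
    using assms by simp
  ultimately show ?thesis
    by (simp add: le_divide_eq_1_pos)
qed

fun eta_from_law :: "real \<Rightarrow> real \<Rightarrow> nat \<Rightarrow> nat \<Rightarrow> nat pmf" where
  "eta_from_law lam mu i 0 = return_pmf i"
| "eta_from_law lam mu i (Suc n) = bind_pmf (eta_from_law lam mu i n) (eta_step lam mu)"

lemma eta_law_eq_eta_from_law: "eta_law lam mu = eta_from_law lam mu 0"
proof
  show "eta_law lam mu n = eta_from_law lam mu 0 n" for n
    by (induction n) auto
qed

lemma xi_law_eq_bind_pmf:
  "t > 0 \<Longrightarrow> xi_law lam mu alpha t = bind_pmf (poisson_pmf (alpha * t)) (eta_from_law lam mu 0)"
  by (simp add: xi_law_def eta_law_eq_eta_from_law)

lemma eta_from_law_add: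
  "eta_from_law lam mu i (m + n) = bind_pmf (eta_from_law lam mu i m) (\<lambda>j. eta_from_law lam mu j n)"
  by (induction n) (auto simp: bind_return_pmf' bind_assoc_pmf)

lemma eta_step_0: "eta_step lam mu 0 = return_pmf 1"
  by (simp add: eta_step_def)

lemma eta_from_law_0_Suc: "eta_from_law lam mu 0 (Suc n) = eta_from_law lam mu 1 n"
  using eta_from_law_add[of lam mu 0 1 n] by (simp add: eta_step_0 bind_return_pmf)

lemma set_pmf_eta_step: "set_pmf (eta_step lam mu i) \<subseteq> {..Suc i}"
  by (auto simp: eta_step_def set_pmf_of_set lessThan_empty_iff split: if_splits)

lemma set_pmf_eta_from_law: "set_pmf (eta_from_law lam mu i n) \<subseteq> {..i + n}"
proof (induction n)
  case (Suc n)
  then show ?case using set_pmf_eta_step[of lam mu] by fastforce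
qed simp

locale catastrophe_chain =
  fixes lam mu :: real
  assumes lam_pos: "0 < lam" and mu_pos: "0 < mu"
begin

definition p :: real where "p = lam / (lam + mu)"

lemma p_pos: "0 < p" and p_less_1: "p < 1"
  using lam_pos mu_pos by (auto simp: p_def field_simps)

lemma nn_integral_eta_step:
  assumes "1 \<le> i" and "\<And>j. 0 \<le> f j"
  shows "(\<integral>\<^sup>+j. ennreal (f j) \<partial>eta_step lam mu i)
           = ennreal (p * f (Suc i) + (1 - p) * (\<Sum>j<i. f j) / i)"
proof -
  have "(\<integral>\<^sup>+j. ennreal (f j) \<partial>eta_step lam mu i)
      = ennreal (f (Suc i)) * ennreal p + ennreal ((\<Sum>j<i. f j) / i) * ennreal (1 - p)"
    using assms p_pos p_less_1
    by (simp add: eta_step_def p_def[symmetric] nn_integral_pmf_of_set lessThan_empty_iff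
          sum_nonneg ennreal_of_nat_eq_real_of_nat divide_ennreal)
  also have "\<dots> = ennreal (p * f (Suc i) + (1 - p) * (\<Sum>j<i. f j) / i)"
    using assms p_pos p_less_1
    by (simp add: ennreal_mult[symmetric] ennreal_plus[symmetric] sum_nonneg mult.commute del: ennreal_plus)
  finally show ?thesis .
qed

lemma emeasure_eta_step_up:
  assumes "1 \<le> i"
  shows "emeasure (measure_pmf (eta_step lam mu i)) {Suc i} = ennreal p"
proof -
  have "emeasure (measure_pmf (eta_step lam mu i)) {Suc i}
      = (\<integral>\<^sup>+j. ennreal (indicator {Suc i} j) \<partial>eta_step lam mu i)"
    by (simp add: ennreal_indicator)
  also have "\<dots> = ennreal (p * 1 + (1 - p) * (\<Sum>j<i. indicator {Suc i} j) / i)"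
    using assms by (subst nn_integral_eta_step) auto
  also have "(\<Sum>j<i. indicator {Suc i} j :: real) = 0"
    by (intro sum.neutral) auto
  finally show ?thesis by simp
qed

lemma emeasure_eta_step_reset:
  "ennreal ((1 - p) / (real i + 1)) \<le> emeasure (measure_pmf (eta_step lam mu i)) {0, 1}"
proof (cases "i = 0")
  case True
  then show ?thesis using p_pos p_less_1 by (simp add: eta_step_0)
next
  case False
  define S where "S = (\<Sum>j<i. indicator {0, 1} j :: real)"
  have "1 \<le> S"
    using member_le_sum[of 0 "{..<i}" "indicator {0, 1} :: nat \<Rightarrow> real"] False by (simp add: S_def)
  then have "1 - p \<le> (1 - p) * S"
    using p_less_1 by (simp add: mult_le_cancel_left1)
  have "(1 - p) / (real i + 1) \<le> (1 - p) / real i"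
    using False p_less_1 by (intro divide_left_mono) auto
  also have "\<dots> \<le> (1 - p) * S / i"
    using \<open>1 - p \<le> (1 - p) * S\<close> by (simp add: divide_right_mono)
  also have "\<dots> \<le> p * indicator {0, 1} (Suc i) + (1 - p) * S / i"
    using p_pos by simp
  finally have "ennreal ((1 - p) / (real i + 1))
      \<le> ennreal (p * indicator {0, 1} (Suc i) + (1 - p) * S / i)"
    by (rule ennreal_leI)
  also have "\<dots> = (\<integral>\<^sup>+j. ennreal (indicator {0, 1} j) \<partial>eta_step lam mu i)"
    using False by (subst nn_integral_eta_step) (auto simp: S_def)
  finally show ?thesis
    by (simp add: ennreal_indicator)
qed

lemma emeasure_eta_from_law_climb:
  assumes "1 \<le> s"
  shows "ennreal (p ^ j) \<le> emeasure (measure_pmf (eta_from_law lam mu s j)) {s + j}"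
proof (induction j)
  case (Suc j)
  have "ennreal (p ^ Suc j) = ennreal (p ^ j) * ennreal p"
    using p_pos by (simp add: ennreal_mult[symmetric] mult.commute)
  also have "\<dots> \<le> ennreal (pmf (eta_from_law lam mu s j) (s + j))
                   * emeasure (measure_pmf (eta_step lam mu (s + j))) {Suc (s + j)}"
    using Suc assms emeasure_eta_step_up[of "s + j"]
    by (intro mult_mono) (auto simp: emeasure_pmf_single)
  also have "\<dots> \<le> emeasure (measure_pmf (eta_from_law lam mu s (Suc j))) {s + Suc j}"
    using emeasure_bind_pmf_ge[of "eta_from_law lam mu s j" "s + j" "eta_step lam mu"] by simp
  finally show ?case .
qed simp

lemma emeasure_eta_from_law_reset:
  assumes "1 \<le> t"
  shows "ennreal ((1 - p) / t) \<le> emeasure (measure_pmf (eta_from_law lam mu 0 t)) {0, 1}"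
proof -
  obtain u where u: "t = Suc u" using assms by (cases t) auto
  have "ennreal ((1 - p) / t) \<le> emeasure (measure_pmf (eta_step lam mu i)) {0, 1}"
    if "i \<in> set_pmf (eta_from_law lam mu 0 u)" for i
  proof -
    have "i \<le> u" using that set_pmf_eta_from_law[of lam mu 0 u] by auto
    then have "(1 - p) / t \<le> (1 - p) / (real i + 1)"
      using p_less_1 u by (intro divide_left_mono) auto
    then show ?thesis
      using emeasure_eta_step_reset[of i] by (meson ennreal_leI order_trans)
  qed
  then have "(\<integral>\<^sup>+i. ennreal ((1 - p) / t) \<partial>eta_from_law lam mu 0 u)
      \<le> (\<integral>\<^sup>+i. emeasure (measure_pmf (eta_step lam mu i)) {0, 1} \<partial>eta_from_law lam mu 0 u)"
    by (intro nn_integral_mono_AE AE_pmfI)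
  then show ?thesis by (simp add: u)
qed

lemma emeasure_eta_from_law_low_start:
  assumes "j \<le> 1" and "1 \<le> m"
  shows "ennreal (p ^ m) \<le> emeasure (measure_pmf (eta_from_law lam mu j m)) {m, Suc m}"
proof (cases "j = 1")
  case True
  have "ennreal (p ^ m) \<le> emeasure (measure_pmf (eta_from_law lam mu 1 m)) {1 + m}"
    by (rule emeasure_eta_from_law_climb) simp
  also have "\<dots> \<le> emeasure (measure_pmf (eta_from_law lam mu 1 m)) {m, Suc m}"
    by (intro emeasure_mono) auto
  finally show ?thesis using True by simp
next
  case False
  obtain m' where m': "m = Suc m'" using assms by (cases m) auto
  have "ennreal (p ^ m) \<le> ennreal (p ^ m')"
    using p_pos p_less_1 m' by (intro ennreal_leI power_decreasing) auto
  also have "\<dots> \<le> emeasure (measure_pmf (eta_from_law lam mu 1 m')) {1 + m'}"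
    by (rule emeasure_eta_from_law_climb) simp
  also have "\<dots> \<le> emeasure (measure_pmf (eta_from_law lam mu 1 m')) {m, Suc m}"
    by (intro emeasure_mono) (auto simp: m')
  moreover have "j = 0"
    using False assms by simp
  ultimately show ?thesis
    by (simp only: m' eta_from_law_0_Suc)
qed

lemma emeasure_eta_from_law_pair:
  assumes "1 \<le> t" and "1 \<le> m"
  shows "ennreal ((1 - p) / t * p ^ m)
           \<le> emeasure (measure_pmf (eta_from_law lam mu 0 (t + m))) {m, Suc m}"
proof -
  have "ennreal ((1 - p) / t * p ^ m) = ennreal (p ^ m) * ennreal ((1 - p) / t)"
    using p_pos p_less_1 by (simp add: ennreal_mult[symmetric] mult.commute)
  also have "\<dots> \<le> ennreal (p ^ m) * emeasure (measure_pmf (eta_from_law lam mu 0 t)) {0, 1}"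
    using emeasure_eta_from_law_reset[OF assms(1)] by (intro mult_left_mono) auto
  also have "\<dots> = (\<integral>\<^sup>+j. ennreal (p ^ m) * indicator {0, 1} j \<partial>eta_from_law lam mu 0 t)"
    by (simp add: nn_integral_cmult_indicator)
  also have "\<dots> \<le> (\<integral>\<^sup>+j. emeasure (measure_pmf (eta_from_law lam mu j m)) {m, Suc m}
                      \<partial>eta_from_law lam mu 0 t)"
    using emeasure_eta_from_law_low_start[OF _ assms(2)]
    by (intro nn_integral_mono) (auto split: split_indicator)
  also have "\<dots> = emeasure (measure_pmf (eta_from_law lam mu 0 (t + m))) {m, Suc m}"
    by (simp add: eta_from_law_add)
  finally show ?thesis .
qed

lemma xi_law_pair_ge:
  assumes "0 < T" and "1 \<le> t" and "1 \<le> m"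
  shows "pmf (poisson_pmf (alpha * T)) (t + m) * ((1 - p) / t * p ^ m)
           \<le> measure_pmf.prob (xi_law lam mu alpha T) {m, Suc m}"
proof -
  have "ennreal (pmf (poisson_pmf (alpha * T)) (t + m) * ((1 - p) / t * p ^ m))
      = ennreal (pmf (poisson_pmf (alpha * T)) (t + m)) * ennreal ((1 - p) / t * p ^ m)"
    using p_pos p_less_1 by (intro ennreal_mult) auto
  also have "\<dots> \<le> ennreal (pmf (poisson_pmf (alpha * T)) (t + m))
                   * emeasure (measure_pmf (eta_from_law lam mu 0 (t + m))) {m, Suc m}"
    using emeasure_eta_from_law_pair[OF assms(2,3)] by (intro mult_left_mono) auto
  also have "\<dots> \<le> emeasure (measure_pmf (xi_law lam mu alpha T)) {m, Suc m}"
    using assms(1) by (simp only: xi_law_eq_bind_pmf emeasure_bind_pmf_ge)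
  finally show ?thesis
    by (simp add: measure_pmf.emeasure_eq_measure del: ennreal_plus)
qed

definition step_mean :: "real \<Rightarrow> nat \<Rightarrow> real" where
  "step_mean r i = (if i = 0 then r else p * r ^ Suc i + (1 - p) * (\<Sum>j<i. r ^ j) / i)"

lemma nn_integral_eta_step_power:
  assumes "0 \<le> r"
  shows "(\<integral>\<^sup>+j. ennreal (r ^ j) \<partial>eta_step lam mu i) = ennreal (step_mean r i)"
proof (cases "i = 0")
  case False
  then show ?thesis using assms
    by (subst nn_integral_eta_step) (auto simp: step_mean_def)
qed (simp add: step_mean_def eta_step_0)

lemma eventually_step_mean_le:
  assumes "1 < r" and "p * r < 1"
  shows "eventually (\<lambda>i. step_mean r i \<le> r ^ i) sequentially"
proof -
  define c where "c = (1 - p) / (r - 1)"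
  have "(\<lambda>i. c / real i) \<longlonglongrightarrow> 0"
    by (rule lim_const_over_n)
  then have "eventually (\<lambda>i. c / real i < 1 - p * r) sequentially"
    using assms(2) by (intro order_tendstoD) auto
  then show ?thesis
    using eventually_gt_at_top[of 0]
  proof eventually_elim
    case (elim i)
    have c: "0 \<le> c" using assms p_less_1 by (simp add: c_def)
    have "(1 - p) * (\<Sum>j<i. r ^ j) / i = c * (r ^ i - 1) / i"
      using assms by (simp add: geometric_sum c_def)
    also have "\<dots> \<le> (c / i) * r ^ i"
      using c by (simp add: divide_right_mono mult_left_mono)
    also have "\<dots> \<le> (1 - p * r) * r ^ i"
      using elim assms by (intro mult_right_mono) auto
    finally show ?case
      using elim by (simp add: step_mean_def algebra_simps)
  qed
qed

lemma eta_step_geometric_drift: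
  assumes "1 < r" and "p * r < 1"
  obtains K where "0 < K" and "\<And>i. (\<integral>\<^sup>+j. ennreal (r ^ j) \<partial>eta_step lam mu i) \<le> ennreal (r ^ i + K)"
proof -
  obtain K where "0 < K" and K: "\<And>i. step_mean r i \<le> r ^ i + K"
    using eventually_le_imp_le_add_const[OF eventually_step_mean_le[OF assms]] by blast
  show ?thesis
  proof (rule that[OF \<open>0 < K\<close>])
    show "(\<integral>\<^sup>+j. ennreal (r ^ j) \<partial>eta_step lam mu i) \<le> ennreal (r ^ i + K)" for i
      using assms K[of i] by (simp add: nn_integral_eta_step_power ennreal_leI del: ennreal_plus)
  qed
qed

lemma nn_integral_eta_from_law_power_le:
  assumes "0 \<le> r" and "0 \<le> K"
    and drift: "\<And>i. (\<integral>\<^sup>+j. ennreal (r ^ j) \<partial>eta_step lam mu i) \<le> ennreal (r ^ i + K)"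
  shows "(\<integral>\<^sup>+j. ennreal (r ^ j) \<partial>eta_from_law lam mu s n) \<le> ennreal (r ^ s + real n * K)"
proof (induction n)
  case (Suc n)
  have "(\<integral>\<^sup>+j. ennreal (r ^ j) \<partial>eta_from_law lam mu s (Suc n))
      = (\<integral>\<^sup>+i. (\<integral>\<^sup>+j. ennreal (r ^ j) \<partial>eta_step lam mu i) \<partial>eta_from_law lam mu s n)"
    by simp
  also have "\<dots> \<le> (\<integral>\<^sup>+i. ennreal (r ^ i) + ennreal K \<partial>eta_from_law lam mu s n)"
    using drift assms by (intro nn_integral_mono) simp
  also have "\<dots> = (\<integral>\<^sup>+i. ennreal (r ^ i) \<partial>eta_from_law lam mu s n) + ennreal K"
    by (subst nn_integral_add) auto
  also have "\<dots> \<le> ennreal (r ^ s + real n * K) + ennreal K"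
    using Suc by (rule add_right_mono)
  also have "\<dots> = ennreal (r ^ s + real (Suc n) * K)"
    using assms by (simp add: algebra_simps)
  finally show ?case .
qed simp

lemma emeasure_eta_from_law_tail:
  assumes "1 < r" and "0 \<le> K"
    and drift: "\<And>i. (\<integral>\<^sup>+j. ennreal (r ^ j) \<partial>eta_step lam mu i) \<le> ennreal (r ^ i + K)"
    and "1 \<le> s" and "0 \<le> x"
  shows "emeasure (measure_pmf (eta_from_law lam mu 0 n)) {j. x \<le> real j}
           \<le> ennreal ((1 + real n * K) * s ^ n / (r * s) powr x)"
proof -
  define c where "c = s ^ n / (r * s) powr x"
  have c: "0 \<le> c"
    using assms by (simp add: c_def)
  have "indicator {j. x \<le> real j} j \<le> ennreal (c * r ^ j)"
    if "j \<in> set_pmf (eta_from_law lam mu 0 n)" for j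
  proof (cases "x \<le> real j")
    case True
    have "j \<le> n"
      using that set_pmf_eta_from_law[of lam mu 0 n] by auto
    then have "1 \<le> c * r ^ j"
      unfolding c_def using True assms by (intro one_le_tilted_power)
    then show ?thesis
      using True ennreal_leI[of 1 "c * r ^ j"] by simp
  qed simp
  then have "(\<integral>\<^sup>+j. indicator {j. x \<le> real j} j \<partial>eta_from_law lam mu 0 n)
      \<le> (\<integral>\<^sup>+j. ennreal (c * r ^ j) \<partial>eta_from_law lam mu 0 n)"
    by (intro nn_integral_mono_AE AE_pmfI)
  then have "emeasure (measure_pmf (eta_from_law lam mu 0 n)) {j. x \<le> real j}
      \<le> (\<integral>\<^sup>+j. ennreal (c * r ^ j) \<partial>eta_from_law lam mu 0 n)"
    by simp
  also have "\<dots> = ennreal c * (\<integral>\<^sup>+j. ennreal (r ^ j) \<partial>eta_from_law lam mu 0 n)"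
    using c assms by (simp add: ennreal_mult nn_integral_cmult)
  also have "\<dots> \<le> ennreal c * ennreal (1 + real n * K)"
    using nn_integral_eta_from_law_power_le[of r K 0 n] assms by (intro mult_left_mono) auto
  also have "\<dots> = ennreal ((1 + real n * K) * s ^ n / (r * s) powr x)"
    using c assms by (subst ennreal_mult[symmetric]) (auto simp: c_def field_simps)
  finally show ?thesis .
qed

lemma xi_law_tail:
  assumes "1 < r" and "0 \<le> K"
    and drift: "\<And>i. (\<integral>\<^sup>+j. ennreal (r ^ j) \<partial>eta_step lam mu i) \<le> ennreal (r ^ i + K)"
    and "1 \<le> s" and "0 \<le> x" and "0 < alpha" and "0 < T"
  shows "measure_pmf.prob (xi_law lam mu alpha T) {j. x \<le> real j}
           \<le> exp (alpha * T * (s - 1)) * (1 + K * (alpha * T) * s) / (r * s) powr x"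
    (is "_ \<le> ?B")
proof -
  define L where "L = alpha * T"
  define h where "h n = (1 + real n * K) * s ^ n / (r * s) powr x" for n :: nat
  have h_nonneg: "0 \<le> h n" for n
    using assms by (simp add: h_def)
  have sums: "(\<lambda>n. pmf (poisson_pmf L) n * h n) sums ?B"
    using sums_divide[OF sums_poisson_pmf_affine_geometric[of L K s], of "(r * s) powr x"] assms
    by (simp add: h_def L_def mult.assoc)
  have "emeasure (measure_pmf (xi_law lam mu alpha T)) {j. x \<le> real j}
      = (\<integral>\<^sup>+n. emeasure (measure_pmf (eta_from_law lam mu 0 n)) {j. x \<le> real j} \<partial>poisson_pmf L)"
    using assms by (simp add: xi_law_eq_bind_pmf L_def)
  also have "\<dots> \<le> (\<integral>\<^sup>+n. ennreal (h n) \<partial>poisson_pmf L)"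
    unfolding h_def by (intro nn_integral_mono emeasure_eta_from_law_tail assms)
  also have "\<dots> = (\<integral>\<^sup>+n. ennreal (pmf (poisson_pmf L) n) * ennreal (h n) \<partial>count_space UNIV)"
    by (rule nn_integral_measure_pmf)
  also have "\<dots> = (\<Sum>n. ennreal (pmf (poisson_pmf L) n * h n))"
    by (simp add: nn_integral_count_space_nat ennreal_mult[symmetric] h_nonneg)
  also have "\<dots> = ennreal ?B"
    using sums h_nonneg by (intro suminf_ennreal2[THEN trans] sums_unique[symmetric, THEN arg_cong]) (auto simp: sums_summable)
  finally have "emeasure (measure_pmf (xi_law lam mu alpha T)) {j. x \<le> real j} \<le> ennreal ?B" .
  moreover have "0 \<le> ?B"
    using assms by (intro divide_nonneg_nonneg mult_nonneg_nonneg add_nonneg_nonneg) auto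
  ultimately show ?thesis
    by (simp add: measure_pmf.emeasure_eq_measure)
qed

end


lemma scaled_nat_ge_Inf_closure:
  fixes B :: "real set"
  assumes "0 < c"
  shows "{n. real n / c \<in> B} \<subseteq> {j. Inf (closure B \<inter> {0..}) * c \<le> real j}"
proof
  fix n assume "n \<in> {n. real n / c \<in> B}"
  then have "real n / c \<in> closure B \<inter> {0..}"
    using assms closure_subset[of B] by auto
  then have "Inf (closure B \<inter> {0..}) \<le> real n / c"
    by (rule cInf_lower) (auto intro: bdd_belowI[of _ 0])
  then show "n \<in> {j. Inf (closure B \<inter> {0..}) * c \<le> real j}"
    using assms by (simp add: field_simps)
qed

lemma eln_div_less_iff:
  assumes "0 < c" and "0 \<le> q"
  shows "eln q / ereal c < ereal y \<longleftrightarrow> q < exp (y * c)"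
proof (cases "q = 0")
  case False
  then have "0 < q" using assms by simp
  have "eln q / ereal c = ereal (ln q / c)"
    using False assms by (simp add: eln_def)
  moreover have "ln q / c < y \<longleftrightarrow> ln q < y * c"
    using assms by (simp add: divide_less_eq)
  moreover have "ln q < y * c \<longleftrightarrow> q < exp (y * c)"
    using \<open>0 < q\<close> by (metis exp_gt_zero ln_exp ln_less_cancel_iff)
  ultimately show ?thesis by simp
qed (use assms in \<open>simp add: eln_def\<close>)

lemma less_eln_div_iff:
  assumes "0 < c" and "0 \<le> q"
  shows "ereal y < eln q / ereal c \<longleftrightarrow> exp (y * c) < q"
proof (cases "q = 0")
  case False
  then have "0 < q" using assms by simp
  have "eln q / ereal c = ereal (ln q / c)"
    using False assms by (simp add: eln_def)
  moreover have "y < ln q / c \<longleftrightarrow> y * c < ln q"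
    using assms by (simp add: less_divide_eq)
  moreover have "y * c < ln q \<longleftrightarrow> exp (y * c) < q"
    using \<open>0 < q\<close> by (metis exp_gt_zero ln_exp ln_less_cancel_iff)
  ultimately show ?thesis by simp
qed (use assms in \<open>simp add: eln_def\<close>)

locale catastrophe_ldp = catastrophe_chain +
  fixes alpha k :: real and phi :: "real \<Rightarrow> real"
  assumes alpha_pos: "0 < alpha" and k_pos: "0 < k"
    and phi_pos: "\<forall>T>0. 0 < phi T"
    and phi_at_top: "filterlim phi at_top at_top"
    and phi_over_T: "((\<lambda>T. phi T / T) \<longlongrightarrow> k) at_top"
begin

abbreviation xi :: "real \<Rightarrow> nat pmf" where
  "xi T \<equiv> xi_law lam mu alpha T"

lemma eventually_pos: "eventually (\<lambda>T. 0 < T \<and> 0 < phi T) at_top"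
  using eventually_gt_at_top[of 0] by eventually_elim (use phi_pos in auto)

lemma tendsto_T_over_phi: "((\<lambda>T. T / phi T) \<longlongrightarrow> 1 / k) at_top"
  using tendsto_inverse[OF phi_over_T] k_pos by (simp add: inverse_eq_divide)

lemma tendsto_inverse_phi: "((\<lambda>T. 1 / phi T) \<longlongrightarrow> 0) at_top"
  using tendsto_inverse_0_at_top[OF phi_at_top] by (simp add: inverse_eq_divide)

lemma tendsto_ln_affine_over_phi:
  assumes "0 < c"
  shows "((\<lambda>T. ln (1 + c * T) / phi T) \<longlongrightarrow> 0) at_top"
proof -
  have "((\<lambda>T. ln (1 + c * T) / T) \<longlongrightarrow> 0) at_top"
    using assms by real_asymp
  then have "((\<lambda>T. ln (1 + c * T) / T * (T / phi T)) \<longlongrightarrow> 0 * (1 / k)) at_top"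
    by (intro tendsto_mult tendsto_T_over_phi)
  moreover have "eventually (\<lambda>T. ln (1 + c * T) / T * (T / phi T) = ln (1 + c * T) / phi T) at_top"
    using eventually_pos by eventually_elim simp
  ultimately show ?thesis
    by (simp add: Lim_transform_eventually)
qed

definition scaled_ceiling :: "real \<Rightarrow> real \<Rightarrow> nat" where
  "scaled_ceiling c T = nat \<lceil>c * phi T\<rceil>"

lemma scaled_ceiling_bounds:
  assumes "0 \<le> c" and "0 < phi T"
  shows "c * phi T \<le> real (scaled_ceiling c T)" and "real (scaled_ceiling c T) < c * phi T + 1"
  using of_nat_ceiling[of "c * phi T"] real_nat_ceiling_less[of "c * phi T"] assms
  by (simp_all add: scaled_ceiling_def)

lemma tendsto_scaled_ceiling:
  assumes "0 \<le> c"
  shows "((\<lambda>T. real (scaled_ceiling c T) / phi T) \<longlongrightarrow> c) at_top"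
proof (rule tendsto_sandwich[of "\<lambda>_. c" _ _ "\<lambda>T. c + 1 / phi T"])
  show "eventually (\<lambda>T. c \<le> real (scaled_ceiling c T) / phi T) at_top"
    using eventually_pos
  proof eventually_elim
    case (elim T)
    then show ?case using scaled_ceiling_bounds(1)[OF assms] by (simp add: field_simps)
  qed
  show "eventually (\<lambda>T. real (scaled_ceiling c T) / phi T \<le> c + 1 / phi T) at_top"
    using eventually_pos
  proof eventually_elim
    case (elim T)
    then show ?case using scaled_ceiling_bounds(2)[OF assms] by (simp add: field_simps less_imp_le)
  qed
  show "((\<lambda>T. c + 1 / phi T) \<longlongrightarrow> c) at_top"
    using tendsto_add[OF tendsto_const tendsto_inverse_phi, of c] by simp
qed simp

lemma tendsto_ln_scaled_ceiling:
  assumes "0 < c"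
  shows "((\<lambda>T. ln (real (scaled_ceiling c T) + 1) / phi T) \<longlongrightarrow> 0) at_top"
proof (rule tendsto_sandwich[of "\<lambda>_. 0" _ _ "\<lambda>T. ln (c * phi T + 2) / phi T"])
  show "eventually (\<lambda>T. 0 \<le> ln (real (scaled_ceiling c T) + 1) / phi T) at_top"
    using eventually_pos by eventually_elim simp
  show "eventually (\<lambda>T. ln (real (scaled_ceiling c T) + 1) / phi T \<le> ln (c * phi T + 2) / phi T) at_top"
    using eventually_pos
  proof eventually_elim
    case (elim T)
    then have "ln (real (scaled_ceiling c T) + 1) \<le> ln (c * phi T + 2)"
      using scaled_ceiling_bounds(2)[of c T] assms by (intro ln_mono) auto
    then show ?case
      using elim by (intro divide_right_mono) auto
  qed
  have "((\<lambda>u. ln (c * u + 2) / u) \<longlongrightarrow> 0) at_top"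
    using assms by real_asymp
  then show "((\<lambda>T. ln (c * phi T + 2) / phi T) \<longlongrightarrow> 0) at_top"
    using filterlim_compose[OF _ phi_at_top] by blast
qed simp

lemma tendsto_T_over_scaled_ceiling:
  assumes "0 < c"
  shows "((\<lambda>T. T / (real (scaled_ceiling c T) + 1)) \<longlongrightarrow> 1 / (k * c)) at_top"
proof -
  have "((\<lambda>T. (T / phi T) / (real (scaled_ceiling c T) / phi T + 1 / phi T)) \<longlongrightarrow> (1 / k) / (c + 0)) at_top"
    using assms by (intro tendsto_intros tendsto_T_over_phi tendsto_scaled_ceiling tendsto_inverse_phi) auto
  moreover have "eventually (\<lambda>T. (T / phi T) / (real (scaled_ceiling c T) / phi T + 1 / phi T)
                                  = T / (real (scaled_ceiling c T) + 1)) at_top"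
    using eventually_pos by eventually_elim (simp add: field_simps)
  ultimately show ?thesis
    by (simp add: Lim_transform_eventually)
qed

lemma eventually_scaled_ceiling_pair_in:
  assumes "open U" and "y \<in> U" and "0 \<le> y"
  shows "eventually (\<lambda>T. real (scaled_ceiling y T) / phi T \<in> U
                        \<and> real (Suc (scaled_ceiling y T)) / phi T \<in> U) at_top"
proof -
  have "((\<lambda>T. real (Suc (scaled_ceiling y T)) / phi T) \<longlongrightarrow> y) at_top"
    using tendsto_add[OF tendsto_scaled_ceiling[OF assms(3)] tendsto_inverse_phi]
    by (simp add: add_divide_distrib add.commute)
  then have "eventually (\<lambda>T. real (Suc (scaled_ceiling y T)) / phi T \<in> U) at_top"
    using assms(1,2) by (rule topological_tendstoD)
  moreover have "eventually (\<lambda>T. real (scaled_ceiling y T) / phi T \<in> U) at_top"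
    using assms tendsto_scaled_ceiling[OF assms(3)] by (auto dest: topological_tendstoD)
  ultimately show ?thesis
    by eventually_elim simp
qed

definition climb_cost :: real where
  "climb_cost = ln ((lam + mu) / lam)"

definition poisson_rate :: "real \<Rightarrow> real" where
  "poisson_rate c = c * ln (c * k / alpha) - c + alpha / k"

definition rate :: "real \<Rightarrow> real" where
  "rate x = x * climb_cost + poisson_rate (max x (alpha / k))"

lemma climb_cost_pos: "0 < climb_cost"
  using lam_pos mu_pos by (simp add: climb_cost_def)

lemma ln_p: "ln p = - climb_cost"
  using lam_pos mu_pos by (simp add: climb_cost_def p_def ln_div)

lemma poisson_rate_nonneg:
  assumes "0 < c"
  shows "0 \<le> poisson_rate c"
proof -
  define u where "u = c * k / alpha"
  have "0 < u" using assms k_pos alpha_pos by (simp add: u_def)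
  have "ln (1 / u) \<le> 1 / u - 1"
    using \<open>0 < u\<close> by (intro ln_le_minus_one) auto
  then have "c * (1 - 1 / u) \<le> c * ln u"
    using \<open>0 < u\<close> assms by (intro mult_left_mono) (auto simp: ln_div)
  moreover have "c * (1 - 1 / u) = c - alpha / k"
    using assms k_pos alpha_pos by (simp add: u_def field_simps)
  ultimately show ?thesis
    by (simp add: poisson_rate_def u_def)
qed

lemma poisson_rate_mean: "poisson_rate (alpha / k) = 0"
  using alpha_pos k_pos by (simp add: poisson_rate_def)

lemma rate_ge:
  assumes "0 \<le> x"
  shows "x * climb_cost \<le> rate x"
  using poisson_rate_nonneg[of "max x (alpha / k)"] alpha_pos k_pos
  by (simp add: rate_def less_max_iff_disj)

lemma continuous_on_rate: "continuous_on UNIV rate"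
proof -
  have "max x (alpha / k) \<noteq> 0" for x
    using alpha_pos k_pos by (metis less_max_iff_disj divide_pos_pos less_irrefl)
  then have "continuous_on UNIV (\<lambda>x. x * climb_cost + (max x (alpha / k) * ln (max x (alpha / k) * k / alpha)
                                  - max x (alpha / k) + alpha / k))"
    using alpha_pos k_pos by (intro continuous_intros) auto
  then show ?thesis
    by (simp add: rate_def[abs_def] poisson_rate_def)
qed

lemma J_rate_eq_rate:
  assumes "0 \<le> x"
  shows "J_rate lam mu alpha k x = ereal (rate x)"
proof (cases "x < alpha / k")
  case True
  then show ?thesis
    using assms by (simp add: J_rate_def rate_def poisson_rate_mean climb_cost_def mult.commute)
next
  case False
  then have "0 < x"
    using alpha_pos k_pos by (smt (verit) divide_pos_pos)
  have "ln ((lam + mu) / lam * (x * k / alpha)) = climb_cost + ln (x * k / alpha)"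
    unfolding climb_cost_def using lam_pos mu_pos \<open>0 < x\<close> alpha_pos k_pos
    by (intro ln_mult_pos) auto
  moreover have "k * x * (lam + mu) / (alpha * lam) = (lam + mu) / lam * (x * k / alpha)"
    by (simp add: field_simps)
  ultimately have "ln (k * x * (lam + mu) / (alpha * lam)) = climb_cost + ln (x * k / alpha)"
    by simp
  then show ?thesis
    using False assms by (simp add: J_rate_def rate_def poisson_rate_def max_def algebra_simps)
qed

lemma J_rate_nonneg: "0 \<le> J_rate lam mu alpha k x"
proof (cases "x < 0")
  case False
  then have "0 \<le> rate x"
    using rate_ge[of x] climb_cost_pos by (smt (verit) mult_nonneg_nonneg)
  then show ?thesis
    using False J_rate_eq_rate[of x] by simp
qed (simp add: J_rate_def)

lemma J_rate_finite_imp_nonneg: "J_rate lam mu alpha k x < \<infinity> \<Longrightarrow> 0 \<le> x"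
  by (cases "x < 0") (auto simp: J_rate_def)

lemma compact_J_rate_sublevel: "compact {x. J_rate lam mu alpha k x \<le> ereal c}"
proof -
  have "{x. J_rate lam mu alpha k x \<le> ereal c} = {0..} \<inter> {x. rate x \<le> c}"
  proof (intro set_eqI iffI)
    fix x assume x: "x \<in> {x. J_rate lam mu alpha k x \<le> ereal c}"
    then have "0 \<le> x"
      by (intro J_rate_finite_imp_nonneg) (auto intro: order_le_less_trans)
    then show "x \<in> {0..} \<inter> {x. rate x \<le> c}"
      using x J_rate_eq_rate[of x] by simp
  qed (use J_rate_eq_rate in simp)
  moreover have "closed ({0..} \<inter> {x. rate x \<le> c})"
    using continuous_on_rate by (intro closed_Int closed_Collect_le continuous_intros) auto
  moreover have "{0..} \<inter> {x. rate x \<le> c} \<subseteq> {0..c / climb_cost}"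
    using rate_ge climb_cost_pos by (force simp: field_simps)
  ultimately show ?thesis
    by (metis bounded_closed_interval bounded_subset compact_eq_bounded_closed)
qed

text \<open>max 1 (a k / alpha) is the optimal Chernoff tilt s for the Poisson clock.\<close>

lemma upper_exponent_critical:
  assumes "0 \<le> a"
  shows "alpha * (max 1 (a * k / alpha) - 1) / k - a * ln (max 1 (a * k / alpha) / p) = - rate a"
proof (cases "a \<le> alpha / k")
  case True
  then have "a * k / alpha \<le> 1"
    using alpha_pos k_pos by (simp add: field_simps)
  then show ?thesis
    using True p_pos by (simp add: rate_def max_def poisson_rate_mean ln_div ln_p)
next
  case False
  then have "1 < a * k / alpha"
    using alpha_pos k_pos by (simp add: field_simps)
  moreover have "alpha * (a * k / alpha - 1) / k = a - alpha / k"
    using alpha_pos k_pos by (simp add: field_simps)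
  moreover have "ln (a * k / alpha / p) = ln (a * k / alpha) - ln p"
    using \<open>1 < a * k / alpha\<close> p_pos by (subst ln_div) auto
  ultimately show ?thesis
    using False by (simp add: rate_def poisson_rate_def max_def ln_p algebra_simps)
qed

lemma xi_tail_exp_bound:
  assumes "0 \<le> a" and "1 \<le> s" and "1 < r" and "p * r < 1"
    and "alpha * (s - 1) / k - a * ln (r * s) < y"
  shows "eventually (\<lambda>T. measure_pmf.prob (xi T) {j. a * phi T \<le> real j} < exp (y * phi T)) at_top"
proof -
  obtain K where "0 < K"
    and drift: "\<And>i. (\<integral>\<^sup>+j. ennreal (r ^ j) \<partial>eta_step lam mu i) \<le> ennreal (r ^ i + K)"
    using eta_step_geometric_drift[OF assms(3,4)] by blast
  define F where
    "F T = alpha * (s - 1) * (T / phi T) + ln (1 + K * alpha * s * T) / phi T - a * ln (r * s)" for T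
  have "(F \<longlongrightarrow> alpha * (s - 1) * (1 / k) + 0 - a * ln (r * s)) at_top"
    unfolding F_def using \<open>0 < K\<close> alpha_pos assms(2)
    by (intro tendsto_intros tendsto_T_over_phi tendsto_ln_affine_over_phi) auto
  then have "eventually (\<lambda>T. F T < y) at_top"
    using assms(5) by (intro order_tendstoD) auto
  then show ?thesis
    using eventually_pos
  proof eventually_elim
    case (elim T)
    have rs: "0 < r * s"
      using assms by simp
    have "0 < K * alpha * s * T"
      using assms elim \<open>0 < K\<close> alpha_pos by simp
    then have K_pos: "0 < 1 + K * alpha * s * T"
      by linarith
    have "measure_pmf.prob (xi T) {j. a * phi T \<le> real j}
        \<le> exp (alpha * T * (s - 1)) * (1 + K * (alpha * T) * s) / (r * s) powr (a * phi T)"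
      using elim assms \<open>0 < K\<close> alpha_pos by (intro xi_law_tail[OF assms(3) _ drift]) auto
    also have "\<dots> = exp (alpha * T * (s - 1) + ln (1 + K * alpha * s * T) - a * phi T * ln (r * s))"
      using rs K_pos assms by (simp add: powr_def exp_add exp_diff ac_simps)
    also have "\<dots> = exp (phi T * F T)"
      using elim by (simp add: F_def field_simps)
    also have "\<dots> < exp (y * phi T)"
      using elim by (simp add: mult.commute)
    finally show ?case .
  qed
qed

lemma xi_tail_exponent:
  assumes "0 \<le> a" and "- rate a < y"
  shows "eventually (\<lambda>T. measure_pmf.prob (xi T) {j. a * phi T \<le> real j} < exp (y * phi T)) at_top"
proof -
  define s where "s = max 1 (a * k / alpha)"
  have "((\<lambda>r. alpha * (s - 1) / k - a * ln (r * s)) \<longlongrightarrow> alpha * (s - 1) / k - a * ln (1 / p * s))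
          (at_left (1 / p))"
    using p_pos by (intro tendsto_intros) (auto simp: s_def)
  moreover have "alpha * (s - 1) / k - a * ln (1 / p * s) = - rate a"
    using upper_exponent_critical[OF assms(1)] by (simp add: s_def)
  ultimately have "eventually (\<lambda>r. alpha * (s - 1) / k - a * ln (r * s) < y) (at_left (1 / p))"
    using assms(2) by (auto intro: order_tendstoD)
  moreover have "eventually (\<lambda>r. r \<in> {1<..<1 / p}) (at_left (1 / p))"
    using p_pos p_less_1 by (intro eventually_at_left_real) (simp add: field_simps)
  ultimately have "eventually (\<lambda>r. alpha * (s - 1) / k - a * ln (r * s) < y \<and> r \<in> {1<..<1 / p})
                    (at_left (1 / p))"
    by (rule eventually_conj)
  then obtain r where "alpha * (s - 1) / k - a * ln (r * s) < y" and "1 < r" and "r < 1 / p"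
    using eventually_happens'[OF trivial_limit_at_left_real] by auto
  moreover have "p * r < 1"
    using \<open>r < 1 / p\<close> p_pos by (simp add: field_simps)
  ultimately show ?thesis
    using assms by (intro xi_tail_exp_bound) (auto simp: s_def)
qed

lemma xi_scaled_closure_exp_bound:
  assumes "- (INF x\<in>closure B. J_rate lam mu alpha k x) < ereal y"
  shows "eventually (\<lambda>T. measure_pmf.prob (xi T) {n. real n / phi T \<in> B} < exp (y * phi T)) at_top"
proof (cases "closure B \<inter> {0..} = {}")
  case True
  have empty: "{n. real n / phi T \<in> B} = {}" if "0 < phi T" for T
    using True that closure_subset[of B] by fastforce
  show ?thesis
    using eventually_pos by eventually_elim (simp add: empty)
next
  case False
  define a where "a = Inf (closure B \<inter> {0..})"
  have "a \<in> closure B \<inter> {0..}"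
    unfolding a_def using False by (intro closed_contains_Inf closed_Int) (auto intro: bdd_belowI[of _ 0])
  then have "0 \<le> a" and "(INF x\<in>closure B. J_rate lam mu alpha k x) \<le> J_rate lam mu alpha k a"
    by (auto intro: INF_lower)
  then have "(INF x\<in>closure B. J_rate lam mu alpha k x) \<le> ereal (rate a)"
    using J_rate_eq_rate[of a] by simp
  then have "- ereal (rate a) \<le> - (INF x\<in>closure B. J_rate lam mu alpha k x)"
    by (simp only: ereal_minus_le_minus)
  then have "- ereal (rate a) < ereal y"
    using assms by (rule order_le_less_trans)
  then have "eventually (\<lambda>T. measure_pmf.prob (xi T) {j. a * phi T \<le> real j} < exp (y * phi T)) at_top"
    using \<open>0 \<le> a\<close> by (intro xi_tail_exponent) auto
  then show ?thesis
    using eventually_pos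
  proof eventually_elim
    case (elim T)
    have "measure_pmf.prob (xi T) {n. real n / phi T \<in> B}
        \<le> measure_pmf.prob (xi T) {j. a * phi T \<le> real j}"
      using scaled_nat_ge_Inf_closure[of "phi T" B] elim
      by (intro measure_pmf.finite_measure_mono) (auto simp: a_def)
    then show ?case
      using elim by linarith
  qed
qed

lemma ldp_upper:
  "Limsup at_top (\<lambda>T. eln (measure_pmf.prob (xi T) {n. real n / phi T \<in> B}) / ereal (phi T))
     \<le> - (INF x\<in>closure B. J_rate lam mu alpha k x)"
  unfolding Limsup_le_iff
proof (intro allI impI)
  fix y assume y: "- (INF x\<in>closure B. J_rate lam mu alpha k x) < y"
  show "eventually (\<lambda>T. eln (measure_pmf.prob (xi T) {n. real n / phi T \<in> B}) / ereal (phi T) < y) at_top"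
  proof (cases y)
    case (real y')
    have "- (INF x\<in>closure B. J_rate lam mu alpha k x) < ereal y'"
      using real y by simp
    then have "eventually (\<lambda>T. measure_pmf.prob (xi T) {n. real n / phi T \<in> B} < exp (y' * phi T)) at_top"
      by (rule xi_scaled_closure_exp_bound)
    then show ?thesis
      using eventually_pos
      by eventually_elim (simp add: real eln_div_less_iff)
  next
    case PInf
    show ?thesis
      using eventually_pos by eventually_elim (simp add: PInf eln_def)
  qed (use y in simp)
qed

lemma ln_xi_pair_ge:
  assumes "0 < T" and "1 \<le> m" and "m < N"
  shows "0 < measure_pmf.prob (xi T) {m, Suc m}"
    and "real N * ln (alpha * T / (real N + 1)) - 2 * ln (real N + 1) + real N - alpha * T
           + ln (1 - p) - real m * climb_cost \<le> ln (measure_pmf.prob (xi T) {m, Suc m})"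
proof -
  define t where "t = N - m"
  have "1 \<le> t" and "t + m = N"
    using assms by (auto simp: t_def)
  have "0 < alpha * T"
    using assms alpha_pos by simp
  define W where "W = pmf (poisson_pmf (alpha * T)) N * ((1 - p) / t * p ^ m)"
  have W_le: "W \<le> measure_pmf.prob (xi T) {m, Suc m}"
    using xi_law_pair_ge[OF assms(1) \<open>1 \<le> t\<close> assms(2)] by (simp add: W_def \<open>t + m = N\<close>)
  have pmf_pos: "0 < pmf (poisson_pmf (alpha * T)) N"
    using \<open>0 < alpha * T\<close> by simp
  have "0 < W"
    unfolding W_def using pmf_pos p_pos p_less_1 \<open>1 \<le> t\<close> by (intro mult_pos_pos divide_pos_pos) auto
  then show "0 < measure_pmf.prob (xi T) {m, Suc m}"
    using W_le by linarith
  have "ln W = ln (pmf (poisson_pmf (alpha * T)) N) + ln (1 - p) - ln t - real m * climb_cost"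
    unfolding W_def using pmf_pos p_pos p_less_1 \<open>1 \<le> t\<close>
    by (simp add: ln_mult_pos ln_div ln_realpow ln_p)
  moreover have "ln t \<le> ln (real N + 1)"
    using \<open>1 \<le> t\<close> \<open>t + m = N\<close> by (intro ln_mono) auto
  moreover have "ln W \<le> ln (measure_pmf.prob (xi T) {m, Suc m})"
    using W_le \<open>0 < W\<close> by (intro ln_mono) auto
  ultimately show "real N * ln (alpha * T / (real N + 1)) - 2 * ln (real N + 1) + real N - alpha * T
           + ln (1 - p) - real m * climb_cost \<le> ln (measure_pmf.prob (xi T) {m, Suc m})"
    using ln_poisson_pmf_ge[OF \<open>0 < alpha * T\<close>, of N] by linarith
qed

definition pair_exponent :: "real \<Rightarrow> real \<Rightarrow> real \<Rightarrow> real" where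
  "pair_exponent y c T =
     (real (scaled_ceiling c T) * ln (alpha * T / (real (scaled_ceiling c T) + 1))
      - 2 * ln (real (scaled_ceiling c T) + 1) + real (scaled_ceiling c T) - alpha * T
      + ln (1 - p) - real (scaled_ceiling y T) * climb_cost) / phi T"

lemma tendsto_pair_exponent:
  assumes "0 < y" and "0 < c"
  shows "(pair_exponent y c \<longlongrightarrow> - (y * climb_cost + poisson_rate c)) at_top"
proof -
  define N where "N = scaled_ceiling c"
  define m where "m = scaled_ceiling y"
  have "((\<lambda>T. real (N T) / phi T * ln (alpha * (T / (real (N T) + 1)))
          - 2 * (ln (real (N T) + 1) / phi T) + real (N T) / phi T - alpha * (T / phi T)
          + ln (1 - p) * (1 / phi T) - real (m T) / phi T * climb_cost)
        \<longlongrightarrow> c * ln (alpha * (1 / (k * c))) - 2 * 0 + c - alpha * (1 / k) + ln (1 - p) * 0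
            - y * climb_cost) at_top"
    unfolding N_def m_def using assms alpha_pos k_pos
    by (intro tendsto_intros tendsto_scaled_ceiling tendsto_ln_scaled_ceiling tendsto_T_over_phi
          tendsto_T_over_scaled_ceiling tendsto_inverse_phi) auto
  moreover have "ln (alpha * (1 / (k * c))) = - ln (c * k / alpha)"
    using assms alpha_pos k_pos by (simp add: ln_div ln_mult_pos)
  moreover have "eventually (\<lambda>T. real (N T) / phi T * ln (alpha * (T / (real (N T) + 1)))
          - 2 * (ln (real (N T) + 1) / phi T) + real (N T) / phi T - alpha * (T / phi T)
          + ln (1 - p) * (1 / phi T) - real (m T) / phi T * climb_cost = pair_exponent y c T) at_top"
    using eventually_pos by eventually_elim (simp add: pair_exponent_def N_def m_def field_simps)
  ultimately show ?thesis
    by (simp add: poisson_rate_def algebra_simps Lim_transform_eventually)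
qed

lemma xi_pair_exp_lower:
  assumes "0 < y" and "y < c" and "z < - (y * climb_cost + poisson_rate c)"
  shows "eventually (\<lambda>T. exp (z * phi T)
           < measure_pmf.prob (xi T) {scaled_ceiling y T, Suc (scaled_ceiling y T)}) at_top"
proof -
  have "eventually (\<lambda>T. z < pair_exponent y c T) at_top"
    using tendsto_pair_exponent assms by (intro order_tendstoD) auto
  moreover have "eventually (\<lambda>T. 2 / (c - y) \<le> phi T) at_top"
    using phi_at_top by (simp add: filterlim_at_top)
  ultimately show ?thesis
    using eventually_pos
  proof eventually_elim
    case (elim T)
    define N where "N = scaled_ceiling c T"
    define m where "m = scaled_ceiling y T"
    have "y * phi T \<le> real m" and "real m < y * phi T + 1" and "c * phi T \<le> real N"
      using scaled_ceiling_bounds assms elim by (auto simp: m_def N_def)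
    moreover have "2 \<le> (c - y) * phi T"
      using elim assms by (simp add: field_simps)
    moreover have "0 < y * phi T"
      using assms elim by simp
    ultimately have "1 \<le> m" and "m < N"
      by (auto simp: algebra_simps)
    then have pair: "0 < measure_pmf.prob (xi T) {m, Suc m}"
      "pair_exponent y c T * phi T \<le> ln (measure_pmf.prob (xi T) {m, Suc m})"
      using ln_xi_pair_ge[of T m N] elim by (simp_all add: pair_exponent_def m_def N_def)
    then have "z * phi T < ln (measure_pmf.prob (xi T) {m, Suc m})"
      using elim by (smt (verit) mult_strict_right_mono)
    then show ?case
      using pair(1) by (metis exp_less_cancel_iff exp_ln m_def)
  qed
qed

text \<open>The number c phi(T) of Poisson rings must exceed the target height y phi(T) by a margin
  linear in phi(T), to leave room for the reset before the final climb.\<close>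

lemma rate_approx_right:
  assumes "0 \<le> x" and "z < - rate x" and "0 < e"
  obtains y c where "x < y" and "y < x + e" and "y < c"
    and "z < - (y * climb_cost + poisson_rate c)"
proof -
  define M where "M = max x (alpha / k)"
  have "0 < M"
    using alpha_pos k_pos by (simp add: M_def less_max_iff_disj)
  define h where "h d = (x + d) * climb_cost + poisson_rate (M + 2 * d)" for d
  have "((\<lambda>d. (x + d) * climb_cost + ((M + 2 * d) * ln ((M + 2 * d) * k / alpha) - (M + 2 * d) + alpha / k))
        \<longlongrightarrow> (x + 0) * climb_cost + ((M + 2 * 0) * ln ((M + 2 * 0) * k / alpha) - (M + 2 * 0) + alpha / k))
        (at_right 0)"
    using \<open>0 < M\<close> alpha_pos k_pos by (intro tendsto_intros) auto
  moreover have "h 0 = rate x"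
    by (simp add: h_def rate_def M_def)
  ultimately have "(h \<longlongrightarrow> rate x) (at_right 0)"
    by (simp add: h_def[abs_def] poisson_rate_def)
  then have "eventually (\<lambda>d. h d < - z) (at_right 0)"
    using assms(2) by (intro order_tendstoD) auto
  moreover have "eventually (\<lambda>d. d \<in> {0<..<e}) (at_right 0)"
    using assms(3) by (rule eventually_at_right_real)
  ultimately have "eventually (\<lambda>d. h d < - z \<and> d \<in> {0<..<e}) (at_right 0)"
    by (rule eventually_conj)
  then obtain d where "h d < - z" and "0 < d" and "d < e"
    using eventually_happens'[OF trivial_limit_at_right_real] by auto
  then show ?thesis
    using assms by (intro that[of "x + d" "M + 2 * d"]) (auto simp: h_def M_def)
qed

lemma xi_scaled_interior_exp_lower:
  assumes "x \<in> interior B" and "0 \<le> x" and "z < - rate x"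
  shows "eventually (\<lambda>T. exp (z * phi T) < measure_pmf.prob (xi T) {n. real n / phi T \<in> B}) at_top"
proof -
  obtain e where "0 < e" and "ball x e \<subseteq> interior B"
    using assms(1) open_interior open_contains_ball by blast
  obtain y c where "x < y" "y < x + e" "y < c" and z: "z < - (y * climb_cost + poisson_rate c)"
    using rate_approx_right[OF assms(2,3) \<open>0 < e\<close>] .
  have "y \<in> ball x e" and "0 < y"
    using \<open>0 \<le> x\<close> \<open>x < y\<close> \<open>y < x + e\<close> by (simp_all add: dist_real_def)
  show ?thesis
    using xi_pair_exp_lower[OF \<open>0 < y\<close> \<open>y < c\<close> z]
      eventually_scaled_ceiling_pair_in[OF open_ball \<open>y \<in> ball x e\<close> less_imp_le[OF \<open>0 < y\<close>]]
  proof eventually_elim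
    case (elim T)
    then have "{scaled_ceiling y T, Suc (scaled_ceiling y T)} \<subseteq> {n. real n / phi T \<in> B}"
      using \<open>ball x e \<subseteq> interior B\<close> interior_subset[of B] by auto
    then have "measure_pmf.prob (xi T) {scaled_ceiling y T, Suc (scaled_ceiling y T)}
        \<le> measure_pmf.prob (xi T) {n. real n / phi T \<in> B}"
      by (rule measure_pmf.finite_measure_mono) simp
    then show ?case
      using elim by linarith
  qed
qed

lemma ldp_lower:
  "- (INF x\<in>interior B. J_rate lam mu alpha k x)
     \<le> Liminf at_top (\<lambda>T. eln (measure_pmf.prob (xi T) {n. real n / phi T \<in> B}) / ereal (phi T))"
  unfolding le_Liminf_iff
proof (intro allI impI)
  fix w assume "w < - (INF x\<in>interior B. J_rate lam mu alpha k x)"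
  then have "(INF x\<in>interior B. J_rate lam mu alpha k x) < - w"
    by (simp add: ereal_less_uminus_reorder)
  then obtain x where "x \<in> interior B" and Jx: "J_rate lam mu alpha k x < - w"
    by (auto simp: INF_less_iff)
  have "J_rate lam mu alpha k x < \<infinity>"
    using Jx by (rule order_less_le_trans) simp
  then have "0 \<le> x"
    by (rule J_rate_finite_imp_nonneg)
  obtain z where "w \<le> ereal z" and "z < - rate x"
  proof (cases w)
    case (real w')
    then show ?thesis using Jx J_rate_eq_rate[OF \<open>0 \<le> x\<close>] that[of w'] by simp
  next
    case MInf
    then show ?thesis using that[of "- rate x - 1"] by simp
  qed (use Jx in simp)
  show "eventually (\<lambda>T. w < eln (measure_pmf.prob (xi T) {n. real n / phi T \<in> B}) / ereal (phi T)) at_top"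
    using xi_scaled_interior_exp_lower[OF \<open>x \<in> interior B\<close> \<open>0 \<le> x\<close> \<open>z < - rate x\<close>] eventually_pos
  proof eventually_elim
    case (elim T)
    then have "ereal z < eln (measure_pmf.prob (xi T) {n. real n / phi T \<in> B}) / ereal (phi T)"
      by (simp add: less_eln_div_iff)
    with \<open>w \<le> ereal z\<close> show ?case
      by (rule order_le_less_trans)
  qed
qed

end

theorem theorem2p2:
  fixes lam mu alpha k :: real and phi :: "real \<Rightarrow> real"
  assumes "lam > 0" and "mu > 0" and "alpha > 0"
    and "\<forall>T>0. phi T > 0"
    and "filterlim phi at_top at_top"
    and "k > 0" and "((\<lambda>T. phi T / T) \<longlongrightarrow> k) at_top"
  shows "LDP (\<lambda>T B. measure_pmf.prob (xi_law lam mu alpha T) {n. real n / phi T \<in> B})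
             (J_rate lam mu alpha k) phi"
proof -
  interpret catastrophe_ldp lam mu alpha k phi
    using assms by unfold_locales auto
  show ?thesis
    unfolding LDP_def using J_rate_nonneg compact_J_rate_sublevel ldp_upper ldp_lower by blast
qed

end
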